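(* Let a single bidder have a valuation with a continuously differentiable, positive density $f$ on $[0,1]$ and cdf $F$, satisfying the monotone hazard rate condition, i.e. $(1-F(r))/f(r)$ is non-increasing in $r$. For $r\in[0,1]$ let $x(r)=\int_r^1 v f(v)\,dv$ and $y(r)=r\int_r^1 f(v)\,dv$ (the welfare and revenue of the take-it-or-leave-it price $r$). Then for all $r\in(0,1)$, $$x'(r)\,y''(r)-y'(r)\,x''(r)\ \ge\ 0,$$ i.e. the curve $r\mapsto (x(r),y(r))$ (the set of (welfare, revenue) points of all single-bidder deterministic mechanisms) is locally convex.
   Context: For a single bidder, every deterministic truthful mechanism is a posted price $r$: the bidder gets the item and pays $r$ iff her value is at least $r$. *)

theory Defs
  imports "HOL-Analysis.Analysis"
begin

definition cdf :: "(real \<Rightarrow> real) \<Rightarrow> real \<Rightarrow> real" where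
  "cdf f r = integral {0..r} f"

definition welfare :: "(real \<Rightarrow> real) \<Rightarrow> real \<Rightarrow> real" where
  "welfare f r = integral {r..1} (\<lambda>v. v * f v)"

definition revenue :: "(real \<Rightarrow> real) \<Rightarrow> real \<Rightarrow> real" where
  "revenue f r = r * integral {r..1} f"

end

theory Submission
  imports Defs
begin

text \<open>
  Write \<open>G(r) = \<integral>\<^sub>r\<^sup>1 f = 1 - F(r)\<close> for the tail mass of the density.  By the fundamental
  theorem of calculus, on the open interval \<open>(0,1)\<close>
    \<open>x' = -r f\<close>, \<open>x'' = -(f + r f')\<close>, \<open>y' = G - r f\<close>, \<open>y'' = -2 f - r f'\<close>,
  and a direct computation gives
    \<open>x' y'' - y' x'' = r (f\<^sup>2 + G f') + G f\<close>.
  The second summand is non-negative because \<open>f > 0\<close> and \<open>G \<ge> 0\<close>.  For the first, the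
  hazard-rate ratio \<open>h = (1 - F)/f\<close> is non-increasing, so its derivative
  \<open>(-f\<^sup>2 - G f')/f\<^sup>2\<close> is non-positive at every interior point, i.e. \<open>f\<^sup>2 + G f' \<ge> 0\<close>.
\<close>

lemma has_real_derivative_interior:
  assumes "(g has_real_derivative D) (at s within {a..b})" and "s \<in> {a<..<b}"
  shows "(g has_real_derivative D) (at s)"
  using assms at_within_Icc_at[of a s b] by auto

lemma antitone_imp_derivative_nonpos:
  fixes h :: "real \<Rightarrow> real"
  assumes antitone: "\<And>s t. a \<le> s \<Longrightarrow> s \<le> t \<Longrightarrow> t \<le> b \<Longrightarrow> h t \<le> h s"
    and deriv_h: "(h has_real_derivative D) (at r)"
    and r: "r \<in> {a<..<b}"
  shows "D \<le> 0"
proof (rule ccontr)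
  assume "\<not> D \<le> 0"
  then obtain d where d: "d > 0" and incr: "\<And>k. k > 0 \<Longrightarrow> k < d \<Longrightarrow> h r < h (r + k)"
    using DERIV_pos_inc_right[OF deriv_h] by force
  define k where "k = min (d / 2) ((b - r) / 2)"
  have k: "0 < k" "k < d" "r + k \<le> b"
    using d r unfolding k_def by (auto simp: min_def field_simps)
  have "h (r + k) \<le> h r"
    using antitone[of r "r + k"] r k by auto
  with incr[OF k(1,2)] show False by simp
qed

lemma second_deriv_eq:
  fixes g \<phi> :: "real \<Rightarrow> real"
  assumes "open S" and "r \<in> S"
    and first: "\<And>s. s \<in> S \<Longrightarrow> (g has_real_derivative \<phi> s) (at s)"
    and second: "(\<phi> has_real_derivative D) (at r)"
  shows "deriv (deriv g) r = D"
proof -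
  have "(deriv g has_real_derivative D) (at r)"
    using second assms(1,2)
    by (rule has_field_derivative_transform_within_open)
       (use first DERIV_imp_deriv in metis)
  then show ?thesis by (rule DERIV_imp_deriv)
qed

lemma tail_integral_has_derivative:
  assumes "continuous_on {a..b} g" and "s \<in> {a<..<b}"
  shows "((\<lambda>s. integral {s..b} g) has_real_derivative - g s) (at s)"
proof (rule has_real_derivative_interior)
  show "((\<lambda>s. integral {s..b} g) has_real_derivative - g s) (at s within {a..b})"
    using assms by (intro integral_has_real_derivative') auto
qed (use assms in auto)

lemma welfare_has_derivative:
  assumes "continuous_on {0..1} f" and "s \<in> {0<..<1}"
  shows "(welfare f has_real_derivative - (s * f s)) (at s)"
proof -
  have "continuous_on {0..1} (\<lambda>v. v * f v)"
    using assms(1) by (intro continuous_intros)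
  then show ?thesis
    unfolding welfare_def using tail_integral_has_derivative assms(2) by blast
qed

lemma revenue_has_derivative:
  assumes "continuous_on {0..1} f" and "s \<in> {0<..<1}"
  shows "(revenue f has_real_derivative integral {s..1} f - s * f s) (at s)"
proof -
  have "((\<lambda>s. s * integral {s..1} f) has_real_derivative
          s * (- f s) + 1 * integral {s..1} f) (at s)"
    using assms by (intro DERIV_mult' DERIV_ident tail_integral_has_derivative)
  then show ?thesis
    unfolding revenue_def[abs_def] by simp
qed

lemma welfare_derivs:
  assumes cont_f: "continuous_on {0..1} f"
    and f_deriv: "(f has_real_derivative Df) (at r)"
    and r: "r \<in> {0<..<1}"
  shows "deriv (welfare f) r = - (r * f r)"
    and "deriv (deriv (welfare f)) r = - (f r + r * Df)"
proof -
  show "deriv (welfare f) r = - (r * f r)"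
    using welfare_has_derivative[OF cont_f r] by (rule DERIV_imp_deriv)
  have "deriv (deriv (welfare f)) r = - (r * Df + 1 * f r)"
    using welfare_has_derivative[OF cont_f] r
      DERIV_minus[OF DERIV_mult'[OF DERIV_ident f_deriv]]
    by (intro second_deriv_eq[of "{0<..<1}"]) auto
  then show "deriv (deriv (welfare f)) r = - (f r + r * Df)"
    by simp
qed

lemma revenue_derivs:
  assumes cont_f: "continuous_on {0..1} f"
    and f_deriv: "(f has_real_derivative Df) (at r)"
    and r: "r \<in> {0<..<1}"
  shows "deriv (revenue f) r = integral {r..1} f - r * f r"
    and "deriv (deriv (revenue f)) r = - 2 * f r - r * Df"
proof -
  show "deriv (revenue f) r = integral {r..1} f - r * f r"
    using revenue_has_derivative[OF cont_f r] by (rule DERIV_imp_deriv)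
  have "deriv (deriv (revenue f)) r = - f r - (r * Df + 1 * f r)"
    using revenue_has_derivative[OF cont_f] r
      DERIV_diff[OF tail_integral_has_derivative[OF cont_f r] DERIV_mult'[OF DERIV_ident f_deriv]]
    by (intro second_deriv_eq[of "{0<..<1}"]) auto
  then show "deriv (deriv (revenue f)) r = - 2 * f r - r * Df"
    by simp
qed

lemma tail_integral_eq_one_minus_cdf:
  assumes "continuous_on {0..1} f" and "integral {0..1} f = 1" and "r \<in> {0..1}"
  shows "integral {r..1} f = 1 - cdf f r"
proof -
  have "integral {0..r} f + integral {r..1} f = integral {0..1} f"
    using assms integrable_continuous_interval
      Henstock_Kurzweil_Integration.integral_combine[where a=0 and c=r and b=1 and f=f]
    by auto
  then show ?thesis
    unfolding cdf_def using assms(2) by simp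
qed

text \<open>
  Local form of the monotone hazard rate condition: differentiating the non-increasing
  ratio \<open>(1 - F)/f\<close> gives \<open>f\<^sup>2 + (1 - F) f' \<ge> 0\<close> at interior points.
\<close>
lemma mhr_local:
  assumes cont_f: "continuous_on {0..1} f"
    and deriv_f: "(f has_real_derivative Df) (at r)"
    and pos: "f r > 0"
    and mhr: "\<And>a b. 0 \<le> a \<Longrightarrow> a \<le> b \<Longrightarrow> b \<le> 1 \<Longrightarrow>
                (1 - cdf f b) / f b \<le> (1 - cdf f a) / f a"
    and r: "r \<in> {0<..<1}"
  shows "f r * f r + (1 - cdf f r) * Df \<ge> 0"
proof -
  have deriv_cdf: "(cdf f has_real_derivative f r) (at r)"
    unfolding cdf_def[abs_def] using cont_f r
    by (intro has_real_derivative_interior[of _ _ _ 0 1] integral_has_real_derivative) auto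
  have "((\<lambda>s. (1 - cdf f s) / f s) has_real_derivative
          ((- f r) * f r - (1 - cdf f r) * Df) / (f r * f r)) (at r)"
    using DERIV_divide[OF DERIV_diff[OF DERIV_const deriv_cdf] deriv_f] pos by simp
  then have "((- f r) * f r - (1 - cdf f r) * Df) / (f r * f r) \<le> 0"
    using antitone_imp_derivative_nonpos[where h="\<lambda>s. (1 - cdf f s) / f s", OF mhr] r by blast
  then show ?thesis
    using mult_pos_pos[OF pos pos] by (auto simp: divide_le_0_iff)
qed

theorem proposition1:
  fixes f f' :: "real \<Rightarrow> real"
  assumes deriv_f: "\<And>v. v \<in> {0..1} \<Longrightarrow> (f has_real_derivative f' v) (at v within {0..1})"
    and cont_f': "continuous_on {0..1} f'"
    and pos: "\<And>v. v \<in> {0..1} \<Longrightarrow> f v > 0"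
    and density: "integral {0..1} f = 1"
    and mhr: "\<And>a b. 0 \<le> a \<Longrightarrow> a \<le> b \<Longrightarrow> b \<le> 1 \<Longrightarrow>
                (1 - cdf f b) / f b \<le> (1 - cdf f a) / f a"
    and r: "r \<in> {0<..<1}"
  shows "deriv (welfare f) r * deriv (deriv (revenue f)) r
           - deriv (revenue f) r * deriv (deriv (welfare f)) r \<ge> 0"
proof -
  define G where "G = integral {r..1} f"
  have cont_f: "continuous_on {0..1} f"
    using deriv_f DERIV_continuous continuous_on_eq_continuous_within by blast
  have f_deriv: "(f has_real_derivative f' r) (at r)"
    using deriv_f r by (intro has_real_derivative_interior) auto
  have G_eq: "G = 1 - cdf f r"
    unfolding G_def using tail_integral_eq_one_minus_cdf cont_f density r by auto
  have "deriv (welfare f) r * deriv (deriv (revenue f)) r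
          - deriv (revenue f) r * deriv (deriv (welfare f)) r
        = r * (f r * f r + G * f' r) + G * f r"
    unfolding welfare_derivs[OF cont_f f_deriv r] revenue_derivs[OF cont_f f_deriv r] G_def
    by (simp add: algebra_simps)
  moreover have "f r * f r + G * f' r \<ge> 0"
    unfolding G_eq using mhr_local cont_f f_deriv pos mhr r by auto
  moreover have "G \<ge> 0"
    unfolding G_def using pos r integrable_continuous_interval[OF continuous_on_subset[OF cont_f]]
    by (intro integral_nonneg) (auto intro!: less_imp_le[OF pos])
  ultimately show ?thesis
    using pos[of r] r by simp
qed

end
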